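(* Suppose sudoku flags $Z_1=(g_1,V_1)$ and $Z_2=(g_2,V_2)$, giving rise to orthogonal sudoku solutions with latin radix subsquares, possess data $(\Gamma _1, \beta _1)$ and $(\Gamma _2,\beta _2)$, respectively, with $\Gamma _i=\begin{pmatrix} a_i & b_i\\ c_i & d_i \end{pmatrix}$ for $i\in \{1,2\}$. Further, assume $\beta _1 - \beta _2$ and $b_1(d_2-\beta _2)-b_2(d_1-\beta _1)$ are nonzero. Then $$ g_{12}=V_1\cap V_2=\left[\begin{array}{c} I \\ \Gamma _{12} \end{array}\right], $$ where $\Gamma _{12}=\begin{pmatrix} a_{12} & b_{12} \\ c_{12} & d_{12} \end{pmatrix}$, and, with $D=b_1(d_2-\beta _2)-b_2(d_1-\beta _1)$, \begin{align*} a _{12}&=\frac{b_1b_2(c_1-c_2)+a_2b_1(d_2-\beta _2)-a_1b_2(d_1-\beta _1)}{D},\qquad b _{12}=\frac{b_1b_2(\beta _1-\beta _2)}{D},\\ c _{12}&=\frac{b_1c_1(d_2-\beta _2)-b_2c_2(d_1-\beta _1)+(a_2-a_1)(d_1-\beta _1)(d_2-\beta _2)}{D},\qquad d _{12}=\frac{\beta _1 b_1 (d_2-\beta _2)-\beta _2b_2(d_1-\beta _1)}{D}. \end{align*}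
   Context: Let $\mathbb F$ be the finite field of order $q$, with locations of order-$q^2$ sudoku solutions identified with $\mathbb F^4$ (coordinates: large row, row within large row, large column, column within large column). A sudoku flag is a pair $Z=(g,V)$ of subspaces of $\mathbb F^4$, $\dim g=2$, $\dim V=3$, $g\subset V$, with $g$ generating a linear sudoku solution (each symbol's locations form a coset of $g$; radix digits of symbols lie in cosets of $V$). Radix subsquares are the subsquares of the square of radix (base-$q$ leading) digits. It is known that such a flag gives a sudoku solution with latin radix subsquares iff $Z=(\langle (1,0,a,c),(0,1,b,d)\rangle,\langle (1,0,a,c),(0,1,b,d),(0,1,0,\beta)\rangle)$ with $b,\beta\neq0$ and $\Gamma=\begin{pmatrix} a&b\\c&d\end{pmatrix}$ nonsingular; $(\Gamma,\beta)$ is called the datum of $Z$. For $2\times 2$ matrices, $\left[\begin{array}{c} I\\ \Gamma\end{array}\right]$ denotes the subspace of $\mathbb F^4$ spanned by the columns of the $4\times 2$ matrix with $I$ (the $2\times 2$ identity) stacked above $\Gamma$. Two linear sudoku solutions generated by $g_1,g_2$ are orthogonal iff $g_1\cap g_2=\{0\}$. *)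

theory Defs
  imports "HOL-Analysis.Analysis"
begin

text \<open>Vectors of F^4, coordinates (large row, row within large row,
  large column, column within large column).\<close>
definition vec4 :: "'a \<Rightarrow> 'a \<Rightarrow> 'a \<Rightarrow> 'a \<Rightarrow> 'a ^ 4" where
  "vec4 x1 x2 x3 x4 = (\<chi> i. if i = 1 then x1 else if i = 2 then x2
                          else if i = 3 then x3 else x4)"

definition lin_span :: "('a::field ^ 4) list \<Rightarrow> ('a ^ 4) set" where
  "lin_span vs = {x. \<exists>cs. length cs = length vs \<and>
                       x = sum_list (map2 (\<lambda>c v. c *s v) cs vs)}"

text \<open>The subspace [I; Gamma] spanned by the columns of I stacked over
  Gamma = (a b; c d).\<close>
definition col_space :: "'a::field \<Rightarrow> 'a \<Rightarrow> 'a \<Rightarrow> 'a \<Rightarrow> ('a ^ 4) set" where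
  "col_space a b c d = lin_span [vec4 1 0 a c, vec4 0 1 b d]"

text \<open>(g, V) is a sudoku flag giving a sudoku solution with latin radix
  subsquares, with datum (Gamma, beta), Gamma = (a b; c d).\<close>
definition flag_with_datum ::
  "('a::field ^ 4) set \<Rightarrow> ('a ^ 4) set \<Rightarrow> 'a \<Rightarrow> 'a \<Rightarrow> 'a \<Rightarrow> 'a \<Rightarrow> 'a \<Rightarrow> bool" where
  "flag_with_datum g V a b c d \<beta> \<longleftrightarrow>
     g = lin_span [vec4 1 0 a c, vec4 0 1 b d] \<and>
     V = lin_span [vec4 1 0 a c, vec4 0 1 b d, vec4 0 1 0 \<beta>] \<and>
     b \<noteq> 0 \<and> \<beta> \<noteq> 0 \<and> a * d - b * c \<noteq> 0"

end

theory Submission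
  imports Defs
begin

text \<open>Each subspace involved is cut out by linear equations in the coordinates: the column space
  [I; \<Gamma>] by two, the hyperplane V of a flag with datum (\<Gamma>, \<beta>) by one.  Hence
  V1 \<inter> V2 is the solution set of a 2\<times>2 linear system in the last two coordinates,
  whose determinant is D; solving it by Cramer's rule expresses those coordinates as linear
  forms in the first two, and the coefficients of these forms are the entries of \<Gamma>12.\<close>

lemma vec4_nth [simp]:
  "vec4 x1 x2 x3 x4 $ 1 = x1" "vec4 x1 x2 x3 x4 $ 2 = x2"
  "vec4 x1 x2 x3 x4 $ 3 = x3" "vec4 x1 x2 x3 x4 $ 4 = x4"
  by (simp_all add: vec4_def)

lemma vec4_eq_iff: "(x::'a^4) = y \<longleftrightarrow> x$1 = y$1 \<and> x$2 = y$2 \<and> x$3 = y$3 \<and> x$4 = y$4"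
  by (simp add: vec_eq_iff forall_4)

lemma lin_span_two: "lin_span [v1, v2] = {s *s v1 + t *s v2 | s t. True}"
  unfolding lin_span_def
proof safe
  fix cs :: "'a list"
  assume "length cs = length [v1, v2]"
  then obtain s t where "cs = [s, t]" by (auto simp: length_Suc_conv)
  then show "\<exists>s t. sum_list (map2 (\<lambda>c v. c *s v) cs [v1, v2]) = s *s v1 + t *s v2 \<and> True"
    by auto
next
  fix s t
  show "\<exists>cs. length cs = length [v1, v2] \<and>
          s *s v1 + t *s v2 = sum_list (map2 (\<lambda>c v. c *s v) cs [v1, v2])"
    by (rule exI[of _ "[s, t]"]) simp
qed

lemma lin_span_three:
  "lin_span [v1, v2, v3] = {s *s v1 + t *s v2 + u *s v3 | s t u. True}"
  unfolding lin_span_def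
proof safe
  fix cs :: "'a list"
  assume "length cs = length [v1, v2, v3]"
  then obtain s t u where "cs = [s, t, u]" by (auto simp: length_Suc_conv)
  then show "\<exists>s t u. sum_list (map2 (\<lambda>c v. c *s v) cs [v1, v2, v3])
                      = s *s v1 + t *s v2 + u *s v3 \<and> True"
    by (auto simp: add.assoc)
next
  fix s t u
  show "\<exists>cs. length cs = length [v1, v2, v3] \<and>
          s *s v1 + t *s v2 + u *s v3 = sum_list (map2 (\<lambda>c v. c *s v) cs [v1, v2, v3])"
    by (rule exI[of _ "[s, t, u]"]) (simp add: add.assoc)
qed

lemma col_space_eq:
  "col_space a b c d = {x. x$3 = a * x$1 + b * x$2 \<and> x$4 = c * x$1 + d * x$2}"
  unfolding col_space_def lin_span_two
  by (auto simp: vec4_eq_iff algebra_simps)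

lemma lin_span_flag_hyperplane:
  fixes b :: "'a::field"
  assumes b: "b \<noteq> 0"
  shows "lin_span [vec4 1 0 a c, vec4 0 1 b d, vec4 0 1 0 \<beta>] =
         {x. b * (x$4 - c * x$1 - \<beta> * x$2) = (d - \<beta>) * (x$3 - a * x$1)}"
proof (intro set_eqI iffI)
  fix x :: "'a^4"
  assume "x \<in> lin_span [vec4 1 0 a c, vec4 0 1 b d, vec4 0 1 0 \<beta>]"
  then show "x \<in> {x. b * (x$4 - c * x$1 - \<beta> * x$2) = (d - \<beta>) * (x$3 - a * x$1)}"
    unfolding lin_span_three by (auto simp: algebra_simps)
next
  fix x :: "'a^4"
  assume "x \<in> {x. b * (x$4 - c * x$1 - \<beta> * x$2) = (d - \<beta>) * (x$3 - a * x$1)}"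
  then have hx: "b * (x$4 - c * x$1 - \<beta> * x$2) = (d - \<beta>) * (x$3 - a * x$1)" by simp
  define t where "t = (x$3 - a * x$1) / b"
  have bt: "b * t = x$3 - a * x$1"
    using b by (simp add: t_def)
  have "b * (c * x$1 + d * t + \<beta> * (x$2 - t)) = b * c * x$1 + \<beta> * b * x$2 + (d - \<beta>) * (b * t)"
    by (simp add: algebra_simps)
  also have "\<dots> = b * x$4"
    using hx unfolding bt by (simp add: algebra_simps)
  finally have "x$4 = c * x$1 + d * t + \<beta> * (x$2 - t)"
    using b by simp
  with bt have "x = x$1 *s vec4 1 0 a c + t *s vec4 0 1 b d + (x$2 - t) *s vec4 0 1 0 \<beta>"
    by (simp add: vec4_eq_iff t_def[symmetric] algebra_simps)
  then show "x \<in> lin_span [vec4 1 0 a c, vec4 0 1 b d, vec4 0 1 0 \<beta>]"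
    unfolding lin_span_three by blast
qed

lemma flag_with_datum_hyperplane:
  assumes "flag_with_datum g V a b c d \<beta>"
  shows "V = {x. b * (x$4 - c * x$1 - \<beta> * x$2) = (d - \<beta>) * (x$3 - a * x$1)}"
  using assms lin_span_flag_hyperplane unfolding flag_with_datum_def by blast

lemma cramer_2x2:
  fixes p1 q1 r1 p2 q2 r2 z w :: "'a::field"
  assumes det: "p1 * q2 - p2 * q1 \<noteq> 0"
  shows "(p1 * z + q1 * w = r1 \<and> p2 * z + q2 * w = r2) \<longleftrightarrow>
         z = (r1 * q2 - r2 * q1) / (p1 * q2 - p2 * q1) \<and>
         w = (p1 * r2 - p2 * r1) / (p1 * q2 - p2 * q1)"
    (is "?system \<longleftrightarrow> z = ?z \<and> w = ?w")
proof
  assume ?system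
  then have "z * (p1 * q2 - p2 * q1) = r1 * q2 - r2 * q1"
        and "w * (p1 * q2 - p2 * q1) = p1 * r2 - p2 * r1"
    by (auto simp: algebra_simps)
  with det show "z = ?z \<and> w = ?w"
    by (simp add: eq_divide_eq)
next
  assume "z = ?z \<and> w = ?w"
  moreover have "p1 * ?z + q1 * ?w = r1"
  proof -
    have "p1 * ?z + q1 * ?w
          = (p1 * (r1 * q2 - r2 * q1) + q1 * (p1 * r2 - p2 * r1)) / (p1 * q2 - p2 * q1)"
      by (simp add: add_divide_distrib)
    also have "\<dots> = r1 * (p1 * q2 - p2 * q1) / (p1 * q2 - p2 * q1)"
      by (simp add: algebra_simps)
    finally show ?thesis using det by simp
  qed
  moreover have "p2 * ?z + q2 * ?w = r2"
  proof -
    have "p2 * ?z + q2 * ?w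
          = (p2 * (r1 * q2 - r2 * q1) + q2 * (p1 * r2 - p2 * r1)) / (p1 * q2 - p2 * q1)"
      by (simp add: add_divide_distrib)
    also have "\<dots> = r2 * (p1 * q2 - p2 * q1) / (p1 * q2 - p2 * q1)"
      by (simp add: algebra_simps)
    finally show ?thesis using det by simp
  qed
  ultimately show ?system by simp
qed

lemma mem_inter_flag_hyperplanes_iff:
  fixes x :: "'a::field ^ 4"
  assumes Z1: "flag_with_datum g1 V1 a1 b1 c1 d1 \<beta>1"
    and Z2: "flag_with_datum g2 V2 a2 b2 c2 d2 \<beta>2"
    and D: "b1 * (d2 - \<beta>2) - b2 * (d1 - \<beta>1) \<noteq> 0"
  defines "r1 \<equiv> b1 * (c1 * x$1 + \<beta>1 * x$2) - (d1 - \<beta>1) * a1 * x$1"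
    and "r2 \<equiv> b2 * (c2 * x$1 + \<beta>2 * x$2) - (d2 - \<beta>2) * a2 * x$1"
  shows "x \<in> V1 \<inter> V2 \<longleftrightarrow>
         x$3 = (r1 * b2 - r2 * b1) / (b1 * (d2 - \<beta>2) - b2 * (d1 - \<beta>1)) \<and>
         x$4 = ((\<beta>1 - d1) * r2 - (\<beta>2 - d2) * r1) / (b1 * (d2 - \<beta>2) - b2 * (d1 - \<beta>1))"
proof -
  have "x \<in> V1 \<inter> V2 \<longleftrightarrow>
        (\<beta>1 - d1) * x$3 + b1 * x$4 = r1 \<and> (\<beta>2 - d2) * x$3 + b2 * x$4 = r2"
    using flag_with_datum_hyperplane[OF Z1] flag_with_datum_hyperplane[OF Z2]
    by (auto simp: r1_def r2_def algebra_simps)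
  moreover have "(\<beta>1 - d1) * b2 - (\<beta>2 - d2) * b1 = b1 * (d2 - \<beta>2) - b2 * (d1 - \<beta>1)"
    by (simp add: algebra_simps)
  ultimately show ?thesis
    using cramer_2x2[of "\<beta>1 - d1" b2 "\<beta>2 - d2" b1 "x$3" "x$4" r1 r2] D by simp
qed

theorem proposition4p8:
  fixes g1 V1 g2 V2 :: "('a::{field,finite} ^ 4) set"
    and a1 b1 c1 d1 \<beta>1 a2 b2 c2 d2 \<beta>2 :: "'a"
  assumes Z1: "flag_with_datum g1 V1 a1 b1 c1 d1 \<beta>1"
    and Z2: "flag_with_datum g2 V2 a2 b2 c2 d2 \<beta>2"
    and orth: "g1 \<inter> g2 = {0}"
    and hb: "\<beta>1 - \<beta>2 \<noteq> 0"
    and hD: "b1 * (d2 - \<beta>2) - b2 * (d1 - \<beta>1) \<noteq> 0"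
  shows "let D = b1 * (d2 - \<beta>2) - b2 * (d1 - \<beta>1);
             a12 = (b1 * b2 * (c1 - c2) + a2 * b1 * (d2 - \<beta>2) - a1 * b2 * (d1 - \<beta>1)) / D;
             b12 = (b1 * b2 * (\<beta>1 - \<beta>2)) / D;
             c12 = (b1 * c1 * (d2 - \<beta>2) - b2 * c2 * (d1 - \<beta>1)
                    + (a2 - a1) * (d1 - \<beta>1) * (d2 - \<beta>2)) / D;
             d12 = (\<beta>1 * b1 * (d2 - \<beta>2) - \<beta>2 * b2 * (d1 - \<beta>1)) / D
         in V1 \<inter> V2 = col_space a12 b12 c12 d12"
proof -
  define a12_num where "a12_num = b1 * b2 * (c1 - c2) + a2 * b1 * (d2 - \<beta>2) - a1 * b2 * (d1 - \<beta>1)"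
  define b12_num where "b12_num = b1 * b2 * (\<beta>1 - \<beta>2)"
  define c12_num where "c12_num = b1 * c1 * (d2 - \<beta>2) - b2 * c2 * (d1 - \<beta>1)
                          + (a2 - a1) * (d1 - \<beta>1) * (d2 - \<beta>2)"
  define d12_num where "d12_num = \<beta>1 * b1 * (d2 - \<beta>2) - \<beta>2 * b2 * (d1 - \<beta>1)"
  have "x \<in> V1 \<inter> V2 \<longleftrightarrow>
        x$3 = (a12_num * x$1 + b12_num * x$2) / (b1 * (d2 - \<beta>2) - b2 * (d1 - \<beta>1)) \<and>
        x$4 = (c12_num * x$1 + d12_num * x$2) / (b1 * (d2 - \<beta>2) - b2 * (d1 - \<beta>1))" for x
    unfolding mem_inter_flag_hyperplanes_iff[OF Z1 Z2 hD]
    by (simp add: a12_num_def b12_num_def c12_num_def d12_num_def algebra_simps)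
  then show ?thesis
    unfolding Let_def col_space_eq a12_num_def[symmetric] b12_num_def[symmetric]
      c12_num_def[symmetric] d12_num_def[symmetric]
    by (auto simp: add_divide_distrib)
qed

end
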